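(* Let $k>l\ge0$ be integers, $\xi\in\mathbb{C}$, $f:\mathbb{N}\to[0,\infty)$, and $A=\xi(a^\dagger)^ka^l+\xi^*(a^\dagger)^la^k+f(a^\dagger a)$ with domain $\mathcal{D}_0$. Assume there exist $\kappa>2$ and $N\in\mathbb{N}$ such that $f(n)\ge\kappa|\xi|n^{(k+l)/2}$ for all $n\ge N$. Then $A$ is essentially self-adjoint and bounded from below.
   Context: $\mathbb{N}=\{0,1,2,\dots\}$. $\mathcal{H}$ is a separable complex Hilbert space with orthonormal basis $(\phi_n)_{n\in\mathbb{N}}$; $\mathcal{D}_0$ is the set of finite linear combinations of the $\phi_n$. The operators $a,a^\dagger$ have domain $\mathcal{D}_0$ and act by $a\phi_n=\sqrt{n}\,\phi_{n-1}$ ($a\phi_0=0$), $a^\dagger\phi_n=\sqrt{n+1}\,\phi_{n+1}$, extended linearly. $f(a^\dagger a)$ has domain $\mathcal{D}_0$ and $f(a^\dagger a)\phi_n=f(n)\phi_n$. *)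

theory Defs
  imports Complex_Main
begin

text \<open>Concrete model: the Hilbert space H with orthonormal basis phi_n is realised
  (unitarily) as l2(N), with phi_n the n-th unit sequence. Inner product is
  antilinear in the first argument.\<close>

type_synonym vec = "nat \<Rightarrow> complex"

definition l2 :: "vec set" where
  "l2 = {x. summable (\<lambda>n. (cmod (x n))\<^sup>2)}"

definition l2_inner :: "vec \<Rightarrow> vec \<Rightarrow> complex" where
  "l2_inner x y = (\<Sum>n. cnj (x n) * y n)"

definition l2_norm :: "vec \<Rightarrow> real" where
  "l2_norm x = sqrt (\<Sum>n. (cmod (x n))\<^sup>2)"

text \<open>D0: finite linear combinations of the basis vectors = finitely supported sequences.\<close>
definition D0 :: "vec set" where
  "D0 = {x. finite {n. x n \<noteq> 0}}"

definition ann :: "vec \<Rightarrow> vec" where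
  "ann x = (\<lambda>n. complex_of_real (sqrt (real (Suc n))) * x (Suc n))"

definition cre :: "vec \<Rightarrow> vec" where
  "cre x = (\<lambda>n. if n = 0 then 0 else complex_of_real (sqrt (real n)) * x (n - 1))"

definition num_fun :: "(nat \<Rightarrow> real) \<Rightarrow> vec \<Rightarrow> vec" where
  "num_fun f x = (\<lambda>n. complex_of_real (f n) * x n)"

type_synonym lop = "vec set \<times> (vec \<Rightarrow> vec)"

definition dense_l2 :: "vec set \<Rightarrow> bool" where
  "dense_l2 D \<longleftrightarrow> D \<subseteq> l2 \<and> (\<forall>x\<in>l2. \<forall>e>0. \<exists>y\<in>D. l2_norm (x - y) < e)"

definition l2_tendsto :: "(nat \<Rightarrow> vec) \<Rightarrow> vec \<Rightarrow> bool" where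
  "l2_tendsto s x \<longleftrightarrow> ((\<lambda>j. l2_norm (s j - x)) \<longlonglongrightarrow> 0)"

definition adjoint :: "lop \<Rightarrow> lop" where
  "adjoint T =
     ({y\<in>l2. \<exists>z\<in>l2. \<forall>x\<in>fst T. l2_inner (snd T x) y = l2_inner x z},
      (\<lambda>y. THE z. z \<in> l2 \<and> (\<forall>x\<in>fst T. l2_inner (snd T x) y = l2_inner x z)))"

definition op_eq :: "lop \<Rightarrow> lop \<Rightarrow> bool" where
  "op_eq S T \<longleftrightarrow> fst S = fst T \<and> (\<forall>x\<in>fst S. snd S x = snd T x)"

definition self_adjoint :: "lop \<Rightarrow> bool" where
  "self_adjoint T \<longleftrightarrow> dense_l2 (fst T) \<and> op_eq (adjoint T) T"

definition closure_graph :: "lop \<Rightarrow> (vec \<times> vec) set" where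
  "closure_graph T = {(x, y). x \<in> l2 \<and> y \<in> l2 \<and>
     (\<exists>s. (\<forall>j. s j \<in> fst T) \<and> l2_tendsto s x \<and> l2_tendsto (\<lambda>j. snd T (s j)) y)}"

definition closable :: "lop \<Rightarrow> bool" where
  "closable T \<longleftrightarrow> (\<forall>x y y'. (x, y) \<in> closure_graph T \<longrightarrow> (x, y') \<in> closure_graph T \<longrightarrow> y = y')"

definition op_closure :: "lop \<Rightarrow> lop" where
  "op_closure T = ({x. \<exists>y. (x, y) \<in> closure_graph T},
                   (\<lambda>x. THE y. (x, y) \<in> closure_graph T))"

definition essentially_self_adjoint :: "lop \<Rightarrow> bool" where
  "essentially_self_adjoint T \<longleftrightarrow> closable T \<and> self_adjoint (op_closure T)"

definition bounded_below :: "lop \<Rightarrow> bool" where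
  "bounded_below T \<longleftrightarrow> (\<exists>c::real. \<forall>x\<in>fst T.
      l2_inner x (snd T x) \<in> \<real> \<and> Re (l2_inner x (snd T x)) \<ge> c * (l2_norm x)\<^sup>2)"

definition A_op :: "nat \<Rightarrow> nat \<Rightarrow> complex \<Rightarrow> (nat \<Rightarrow> real) \<Rightarrow> lop" where
  "A_op k l \<xi> f = (D0, (\<lambda>x. (\<lambda>n. \<xi> * ((cre ^^ k) ((ann ^^ l) x)) n
                              + cnj \<xi> * ((cre ^^ l) ((ann ^^ k) x)) n
                              + num_fun f x n)))"

end

theory Submission
  imports Defs "HOL-Analysis.L2_Norm"
begin

(* In the number basis A acts on sequences as the band matrix
     (A x)_n = xi r_n x_(n-d) + cnj xi s_n x_(n+d) + f(n) x_n,   d = k - l,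
   with s_n = r_(n+d) <= (n + d)^((k+l)/2). Since kappa > 2, the growth hypothesis yields
   lam > 0 and theta < 1/2 with |xi| r_n, |xi| s_n <= theta (f(n) + lam): the off-diagonal
   part is bounded relative to the diagonal D = f + lam with relative bound 2 theta < 1.

   Semiboundedness follows from 2 |xi r_n x_n x_(n-d)| <= theta (D_n |x_n|^2 + D_(n-d) |x_(n-d)|^2),
   which gives <x, A x> >= - lam |x|^2.

   For essential self-adjointness we show that the closure of A and its adjoint are both the
   maximal operator on {x in l2. A x in l2}. The crux is that A x in l2 forces D x in l2:
   writing A + lam = D (1 + L) with |L| <= 2 theta, the Neumann series solves (1 + L) phi = p
   up to an arbitrarily small error for finitely supported p, which bounds |<D p, x>| by
   |(A + lam) x| |p| / (1 - 2 theta). Hence A x is the l2-limit of A applied to the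
   truncations of x. *)

section \<open>Finitely supported and square-summable sequences\<close>

definition vanishes_from :: "vec \<Rightarrow> nat \<Rightarrow> bool" where
  "vanishes_from x N \<longleftrightarrow> (\<forall>n\<ge>N. x n = 0)"

lemma D0_iff_vanishes_from: "x \<in> D0 \<longleftrightarrow> (\<exists>N. vanishes_from x N)"
proof
  assume "x \<in> D0"
  then obtain N where "\<forall>n\<in>{n. x n \<noteq> 0}. n < N"
    unfolding D0_def using finite_nat_set_iff_bounded by blast
  then show "\<exists>N. vanishes_from x N"
    unfolding vanishes_from_def by (meson leD mem_Collect_eq)
next
  assume "\<exists>N. vanishes_from x N"
  then obtain N where "{n. x n \<noteq> 0} \<subseteq> {..<N}"
    unfolding vanishes_from_def by (auto simp: not_less[symmetric])
  then show "x \<in> D0"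
    unfolding D0_def using finite_subset by blast
qed

lemma vanishes_from_mono: "vanishes_from x N \<Longrightarrow> N \<le> M \<Longrightarrow> vanishes_from x M"
  unfolding vanishes_from_def by auto

lemma D0_obtain_common_bound:
  assumes "x \<in> D0" "y \<in> D0"
  obtains N where "vanishes_from x N" "vanishes_from y N"
  by (metis assms D0_iff_vanishes_from max.cobounded1 max.cobounded2 vanishes_from_mono)

lemma D0_add: "x \<in> D0 \<Longrightarrow> y \<in> D0 \<Longrightarrow> (\<lambda>n. x n + y n) \<in> D0"
  unfolding D0_def mem_Collect_eq by (rule finite_subset[of _ "{n. x n \<noteq> 0} \<union> {n. y n \<noteq> 0}"]) auto

lemma D0_diff: "x \<in> D0 \<Longrightarrow> y \<in> D0 \<Longrightarrow> (\<lambda>n. x n - y n) \<in> D0"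
  unfolding D0_def mem_Collect_eq by (rule finite_subset[of _ "{n. x n \<noteq> 0} \<union> {n. y n \<noteq> 0}"]) auto

lemma D0_mult_left: "x \<in> D0 \<Longrightarrow> (\<lambda>n. c n * x n) \<in> D0"
  unfolding D0_def mem_Collect_eq by (rule finite_subset[of _ "{n. x n \<noteq> 0}"]) auto

lemma l2_inner_finite: "vanishes_from x N \<Longrightarrow> l2_inner x y = (\<Sum>n<N. cnj (x n) * y n)"
  unfolding l2_inner_def by (rule suminf_finite) (auto simp: vanishes_from_def not_less[symmetric])

lemma l2_norm_finite: "vanishes_from x N \<Longrightarrow> l2_norm x = L2_set (\<lambda>n. cmod (x n)) {..<N}"
  unfolding l2_norm_def L2_set_def
  by (subst suminf_finite[of "{..<N}"]) (auto simp: vanishes_from_def)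

lemma vanishes_from_l2: "vanishes_from x N \<Longrightarrow> x \<in> l2"
  unfolding l2_def
  by (auto intro!: summable_finite[of "{..<N}"] simp: vanishes_from_def not_less[symmetric])

lemma D0_l2: "x \<in> D0 \<Longrightarrow> x \<in> l2"
  using D0_iff_vanishes_from vanishes_from_l2 by blast

lemma l2_summable: "x \<in> l2 \<Longrightarrow> summable (\<lambda>n. (cmod (x n))\<^sup>2)"
  unfolding l2_def by simp

lemma l2_norm_nonneg: "x \<in> l2 \<Longrightarrow> 0 \<le> l2_norm x"
  unfolding l2_norm_def by (simp add: suminf_nonneg l2_summable)

lemma L2_set_le_l2_norm: "x \<in> l2 \<Longrightarrow> L2_set (\<lambda>n. cmod (x n)) {..<N} \<le> l2_norm x"
  unfolding L2_set_def l2_norm_def by (simp add: sum_le_suminf l2_summable)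

lemma l2_norm_le_if_L2_set_le:
  assumes partial: "\<And>N. L2_set (\<lambda>n. cmod (x n)) {..<N} \<le> C"
  shows "x \<in> l2" and "l2_norm x \<le> C"
proof -
  have C: "0 \<le> C" using partial[of 0] by simp
  have sums: "(\<Sum>n<N. (cmod (x n))\<^sup>2) \<le> C\<^sup>2" for N
    using partial[of N] unfolding L2_set_def by (rule sqrt_le_D)
  show l2: "x \<in> l2"
    unfolding l2_def using summableI_nonneg_bounded[of "\<lambda>n. (cmod (x n))\<^sup>2"] sums by auto
  have "(\<Sum>n. (cmod (x n))\<^sup>2) \<le> C\<^sup>2"
    by (rule suminf_le_const[OF l2_summable[OF l2] sums])
  then show "l2_norm x \<le> C"
    unfolding l2_norm_def by (rule real_le_lsqrt[OF C])
qed

lemma l2_mult_left: "x \<in> l2 \<Longrightarrow> (\<lambda>n. c * x n) \<in> l2"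
  unfolding l2_def by (simp add: norm_mult power_mult_distrib summable_mult)

lemma l2_add:
  assumes "x \<in> l2" "y \<in> l2"
  shows "(\<lambda>n. x n + y n) \<in> l2"
  unfolding l2_def
proof (rule CollectI, rule summable_comparison_test'[where N = 0])
  show "summable (\<lambda>n. 2 * (cmod (x n))\<^sup>2 + 2 * (cmod (y n))\<^sup>2)"
    using assms by (intro summable_add summable_mult) (auto simp: l2_summable)
  fix n
  have "(cmod (x n + y n))\<^sup>2 \<le> (cmod (x n) + cmod (y n))\<^sup>2"
    by (simp add: norm_triangle_ineq power_mono)
  also have "\<dots> \<le> 2 * (cmod (x n))\<^sup>2 + 2 * (cmod (y n))\<^sup>2"
    using sum_squares_bound[of "cmod (x n)" "cmod (y n)"] unfolding power2_sum by linarith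
  finally show "norm ((cmod (x n + y n))\<^sup>2) \<le> 2 * (cmod (x n))\<^sup>2 + 2 * (cmod (y n))\<^sup>2"
    by simp
qed

lemma l2_diff: "x \<in> l2 \<Longrightarrow> y \<in> l2 \<Longrightarrow> x - y \<in> l2"
  using l2_add[of x "\<lambda>n. - 1 * y n"] l2_mult_left[of y "- 1"] by (simp add: fun_diff_def)

lemma l2_norm_uminus: "l2_norm (\<lambda>n. - x n) = l2_norm x"
  unfolding l2_norm_def by simp

lemma l2_norm_minus_commute: "l2_norm (x - y) = l2_norm (y - x)"
  unfolding l2_norm_def by (simp add: norm_minus_commute)

lemma summable_norm_l2_inner:
  assumes "x \<in> l2" "y \<in> l2"
  shows "summable (\<lambda>n. cmod (cnj (x n) * y n))"
proof (rule summable_comparison_test'[where N = 0])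
  show "summable (\<lambda>n. (cmod (x n))\<^sup>2 + (cmod (y n))\<^sup>2)"
    using assms by (intro summable_add) (auto simp: l2_summable)
  show "norm (cmod (cnj (x n) * y n)) \<le> (cmod (x n))\<^sup>2 + (cmod (y n))\<^sup>2" for n
  proof -
    have "2 * (cmod (x n) * cmod (y n)) \<le> (cmod (x n))\<^sup>2 + (cmod (y n))\<^sup>2"
      using sum_squares_bound[of "cmod (x n)" "cmod (y n)"] by (simp add: mult.assoc)
    moreover have "0 \<le> cmod (x n) * cmod (y n)" by simp
    ultimately have "cmod (x n) * cmod (y n) \<le> (cmod (x n))\<^sup>2 + (cmod (y n))\<^sup>2" by linarith
    then show ?thesis by (simp add: norm_mult)
  qed
qed

lemma l2_Cauchy_Schwarz:
  assumes "x \<in> l2" "y \<in> l2"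
  shows "cmod (l2_inner x y) \<le> l2_norm x * l2_norm y"
proof -
  have s: "summable (\<lambda>n. cmod (cnj (x n) * y n))" using summable_norm_l2_inner[OF assms] .
  have "cmod (l2_inner x y) \<le> (\<Sum>n. cmod (cnj (x n) * y n))"
    unfolding l2_inner_def using summable_norm[OF s] by simp
  also have "\<dots> \<le> l2_norm x * l2_norm y"
  proof (rule suminf_le_const[OF s])
    fix N
    have "(\<Sum>n<N. cmod (cnj (x n) * y n)) = (\<Sum>n<N. \<bar>cmod (x n)\<bar> * \<bar>cmod (y n)\<bar>)"
      by (simp add: norm_mult)
    also have "\<dots> \<le> L2_set (\<lambda>n. cmod (x n)) {..<N} * L2_set (\<lambda>n. cmod (y n)) {..<N}"
      by (rule L2_set_mult_ineq)
    also have "\<dots> \<le> l2_norm x * l2_norm y"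
      using assms by (intro mult_mono L2_set_le_l2_norm l2_norm_nonneg) auto
    finally show "(\<Sum>n<N. cmod (cnj (x n) * y n)) \<le> l2_norm x * l2_norm y" .
  qed
  finally show ?thesis .
qed

lemma l2_inner_diff_left:
  assumes "x \<in> l2" "x' \<in> l2" "y \<in> l2"
  shows "l2_inner (x - x') y = l2_inner x y - l2_inner x' y"
proof -
  have "summable (\<lambda>n. cnj (x n) * y n)" "summable (\<lambda>n. cnj (x' n) * y n)"
    using assms by (auto intro: summable_norm_cancel summable_norm_l2_inner)
  then show ?thesis unfolding l2_inner_def by (simp add: suminf_diff algebra_simps)
qed

lemma l2_inner_tendsto_left:
  assumes s: "\<And>j. s j \<in> l2" and x: "x \<in> l2" and y: "y \<in> l2" and lim: "l2_tendsto s x"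
  shows "(\<lambda>j. l2_inner (s j) y) \<longlonglongrightarrow> l2_inner x y"
proof -
  have "(\<lambda>j. l2_norm (s j - x) * l2_norm y) \<longlonglongrightarrow> 0"
    using lim unfolding l2_tendsto_def by (rule tendsto_mult_left_zero)
  then have "(\<lambda>j. l2_inner (s j) y - l2_inner x y) \<longlonglongrightarrow> 0"
  proof (rule tendsto_0_le[OF _ always_eventually, where K = 1], intro allI)
    fix j
    have "cmod (l2_inner (s j) y - l2_inner x y) \<le> l2_norm (s j - x) * l2_norm y"
      using s x y by (simp add: l2_inner_diff_left[symmetric] l2_Cauchy_Schwarz l2_diff)
    then show "norm (l2_inner (s j) y - l2_inner x y) \<le> norm (l2_norm (s j - x) * l2_norm y) * 1"
      by simp
  qed
  then show ?thesis by (rule LIM_zero_cancel)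
qed

lemma l2_tendsto_component:
  assumes s: "\<And>j. s j \<in> l2" and x: "x \<in> l2" and lim: "l2_tendsto s x"
  shows "(\<lambda>j. s j n) \<longlonglongrightarrow> x n"
proof -
  have "(\<lambda>j. s j n - x n) \<longlonglongrightarrow> 0"
    using lim unfolding l2_tendsto_def
  proof (rule tendsto_0_le[OF _ always_eventually, where K = 1], intro allI)
    fix j
    have "cmod ((s j - x) n) \<le> L2_set (\<lambda>m. cmod ((s j - x) m)) {..<Suc n}"
      by (rule member_le_L2_set) auto
    also have "\<dots> \<le> l2_norm (s j - x)" using s x by (intro L2_set_le_l2_norm l2_diff)
    finally show "norm (s j n - x n) \<le> norm (l2_norm (s j - x)) * 1" by simp
  qed
  then show ?thesis by (rule LIM_zero_cancel)
qed

lemma l2_inner_add_left: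
  assumes "x \<in> D0" "x' \<in> D0"
  shows "l2_inner (\<lambda>n. x n + x' n) y = l2_inner x y + l2_inner x' y"
proof -
  obtain N where "vanishes_from x N" "vanishes_from x' N"
    using D0_obtain_common_bound assms .
  moreover from this have "vanishes_from (\<lambda>n. x n + x' n) N" by (simp add: vanishes_from_def)
  ultimately show ?thesis by (simp add: l2_inner_finite sum.distrib distrib_right)
qed

lemma l2_inner_commute: "x \<in> D0 \<Longrightarrow> y \<in> D0 \<Longrightarrow> l2_inner x y = cnj (l2_inner y x)"
  by (erule D0_obtain_common_bound) (auto simp: l2_inner_finite mult.commute)

lemma l2_norm_diff_le:
  assumes "x \<in> D0" "y \<in> D0"
  shows "l2_norm (\<lambda>n. x n - y n) \<le> l2_norm x + l2_norm y"
proof -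
  obtain N where x: "vanishes_from x N" and y: "vanishes_from y N"
    using D0_obtain_common_bound assms .
  then have "vanishes_from (\<lambda>n. x n - y n) N" by (simp add: vanishes_from_def)
  then have "l2_norm (\<lambda>n. x n - y n) = L2_set (\<lambda>n. cmod (x n - y n)) {..<N}"
    by (rule l2_norm_finite)
  also have "\<dots> \<le> L2_set (\<lambda>n. cmod (x n) + cmod (y n)) {..<N}"
    by (rule L2_set_mono) (auto intro: norm_triangle_ineq4)
  also have "\<dots> \<le> l2_norm x + l2_norm y"
    using L2_set_triangle_ineq l2_norm_finite[OF x] l2_norm_finite[OF y] by metis
  finally show ?thesis .
qed

lemma sum_lessThan_shift_vanishing:
  fixes g :: "nat \<Rightarrow> 'a::comm_monoid_add"
  assumes "\<And>n. n < d \<Longrightarrow> g n = 0" "\<And>n. R \<le> n \<Longrightarrow> g n = 0"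
  shows "(\<Sum>n<R. g (n + d)) = (\<Sum>n<R. g n)"
proof -
  have "(\<Sum>n<R. g (n + d)) = sum g {d..<R + d}"
    using sum.shift_bounds_nat_ivl[of g 0 d R] by (simp add: atLeast0LessThan)
  also have "\<dots> = sum g {..<R + d}"
    using assms(1) by (intro sum.mono_neutral_left) auto
  also have "\<dots> = sum g {..<R}"
    using assms(2) by (intro sum.mono_neutral_right) auto
  finally show ?thesis .
qed

lemma sum_lessThan_shift_right:
  fixes g :: "nat \<Rightarrow> 'a::comm_monoid_add"
  shows "(\<Sum>n<R. if d \<le> n then g (n - d) else 0) = (\<Sum>n<R - d. g n)"
proof (induction R)
  case (Suc R)
  then show ?case
    by (cases "d \<le> R") (simp_all add: Suc_diff_le)
qed simp

lemma sum_lessThan_shift_right_le: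
  fixes g :: "nat \<Rightarrow> real"
  assumes "\<And>n. 0 \<le> g n"
  shows "(\<Sum>n<R. if d \<le> n then g (n - d) else 0) \<le> (\<Sum>n<R. g n)"
  unfolding sum_lessThan_shift_right using assms by (intro sum_mono2) auto

lemma sum_lessThan_shift_left_le:
  fixes g :: "nat \<Rightarrow> real"
  assumes "\<And>n. 0 \<le> g n"
  shows "(\<Sum>n<R. g (n + d)) \<le> (\<Sum>n<R + d. g n)"
proof -
  have "(\<Sum>n<R. g (n + d)) = sum g {d..<R + d}"
    using sum.shift_bounds_nat_ivl[of g 0 d R] by (simp add: atLeast0LessThan)
  also have "\<dots> \<le> (\<Sum>n<R + d. g n)" using assms by (intro sum_mono2) auto
  finally show ?thesis .
qed

lemma L2_set_shift_right_le:
  fixes g :: "nat \<Rightarrow> real"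
  shows "L2_set (\<lambda>n. if d \<le> n then g (n - d) else 0) {..<R} \<le> L2_set g {..<R}"
  unfolding L2_set_def
  using sum_lessThan_shift_right_le[where g = "\<lambda>n. (g n)\<^sup>2" and R = R and d = d]
  by (simp add: if_distrib[of "\<lambda>t. t\<^sup>2"] cong: if_cong)

lemma L2_set_shift_left_le:
  fixes g :: "nat \<Rightarrow> real"
  shows "L2_set (\<lambda>n. g (n + d)) {..<R} \<le> L2_set g {..<R + d}"
  unfolding L2_set_def
  using sum_lessThan_shift_left_le[where g = "\<lambda>n. (g n)\<^sup>2" and R = R and d = d] by simp

lemma l2_norm_band_le:
  fixes a b x :: vec
  assumes x: "x \<in> D0" and a: "\<And>n. cmod (a n) \<le> t" and b: "\<And>n. cmod (b n) \<le> t"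
    and a_low: "\<And>n. n < d \<Longrightarrow> a n = 0"
  shows "l2_norm (\<lambda>n. a n * x (n - d) + b n * x (n + d)) \<le> 2 * t * l2_norm x"
proof -
  obtain N where N: "vanishes_from x N" using x D0_iff_vanishes_from by blast
  have t: "0 \<le> t" using a[of 0] norm_ge_zero order_trans by blast
  let ?v = "\<lambda>n. cmod (x n)"
  have "vanishes_from (\<lambda>n. a n * x (n - d) + b n * x (n + d)) (N + d)"
    using N by (simp add: vanishes_from_def)
  then have "l2_norm (\<lambda>n. a n * x (n - d) + b n * x (n + d))
      = L2_set (\<lambda>n. cmod (a n * x (n - d) + b n * x (n + d))) {..<N + d}"
    by (rule l2_norm_finite)
  also have "\<dots> \<le> L2_set (\<lambda>n. t * (if d \<le> n then ?v (n - d) else 0) + t * ?v (n + d)) {..<N + d}"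
  proof (rule L2_set_mono)
    fix n
    have "cmod (a n * x (n - d)) \<le> t * (if d \<le> n then ?v (n - d) else 0)"
      using a[of n] a_low[of n] by (auto simp: norm_mult mult_right_mono)
    moreover have "cmod (b n * x (n + d)) \<le> t * ?v (n + d)"
      using b[of n] by (simp add: norm_mult mult_right_mono)
    ultimately show "cmod (a n * x (n - d) + b n * x (n + d))
        \<le> t * (if d \<le> n then ?v (n - d) else 0) + t * ?v (n + d)"
      by (meson add_mono norm_triangle_ineq order_trans)
  qed simp
  also have "\<dots> \<le> t * L2_set (\<lambda>n. if d \<le> n then ?v (n - d) else 0) {..<N + d}
      + t * L2_set (\<lambda>n. ?v (n + d)) {..<N + d}"
    using L2_set_triangle_ineq[of "\<lambda>n. t * (if d \<le> n then ?v (n - d) else 0)"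
        "\<lambda>n. t * ?v (n + d)"]
    by (simp add: L2_set_right_distrib t)
  also have "\<dots> \<le> t * L2_set ?v {..<N + d} + t * L2_set ?v {..<N + d + d}"
    using t by (intro add_mono mult_left_mono L2_set_shift_right_le L2_set_shift_left_le)
  also have "\<dots> = 2 * t * l2_norm x"
    using l2_norm_finite[OF vanishes_from_mono[OF N, of "N + d"]]
      l2_norm_finite[OF vanishes_from_mono[OF N, of "N + d + d"]] by simp
  finally show ?thesis .
qed

definition basis_vec :: "nat \<Rightarrow> vec" where
  "basis_vec n = (\<lambda>m. if m = n then 1 else 0)"

lemma basis_vec_D0: "basis_vec n \<in> D0"
  unfolding D0_def basis_vec_def by simp

lemma l2_inner_basis_vec: "l2_inner (basis_vec n) y = y n"
proof -
  have "vanishes_from (basis_vec n) (Suc n)" by (simp add: vanishes_from_def basis_vec_def)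
  then have "l2_inner (basis_vec n) y = (\<Sum>m<Suc n. cnj (basis_vec n m) * y m)"
    by (rule l2_inner_finite)
  also have "\<dots> = y n" by (simp add: basis_vec_def)
  finally show ?thesis .
qed

definition truncate :: "nat \<Rightarrow> vec \<Rightarrow> vec" where
  "truncate j x = (\<lambda>n. if n < j then x n else 0)"

lemma truncate_D0: "truncate j x \<in> D0"
  unfolding D0_def truncate_def mem_Collect_eq by (rule finite_subset[of _ "{..<j}"]) auto

lemma tendsto_suminf_tail_zero:
  fixes w :: "nat \<Rightarrow> real"
  assumes "summable w"
  shows "(\<lambda>j. \<Sum>n. if j \<le> n then w n else 0) \<longlonglongrightarrow> 0"
proof -
  have "(\<Sum>n. if j \<le> n then w n else 0) = suminf w - (\<Sum>n<j. w n)" for j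
  proof -
    have "(\<lambda>n. w n - (if n \<in> {..<j} then w n else 0)) sums (suminf w - (\<Sum>n<j. w n))"
      by (intro sums_diff summable_sums assms sums_If_finite_set) simp
    moreover have "(\<lambda>n. w n - (if n \<in> {..<j} then w n else 0)) = (\<lambda>n. if j \<le> n then w n else 0)"
      by auto
    ultimately show ?thesis by (simp add: sums_iff)
  qed
  moreover have "(\<lambda>j. suminf w - (\<Sum>n<j. w n)) \<longlonglongrightarrow> suminf w - suminf w"
    by (intro tendsto_diff tendsto_const summable_LIMSEQ assms)
  ultimately show ?thesis by simp
qed

lemma l2_tendsto_truncate:
  assumes "x \<in> l2"
  shows "l2_tendsto (\<lambda>j. truncate j x) x"
proof -
  have "(\<lambda>n. (cmod ((truncate j x - x) n))\<^sup>2) = (\<lambda>n. if j \<le> n then (cmod (x n))\<^sup>2 else 0)" for j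
    by (auto simp: truncate_def)
  then show ?thesis unfolding l2_tendsto_def l2_norm_def
    using tendsto_real_sqrt[OF tendsto_suminf_tail_zero[OF l2_summable[OF assms]]] by simp
qed

lemma dense_l2_if_D0_subset:
  assumes "D0 \<subseteq> S" "S \<subseteq> l2"
  shows "dense_l2 S"
  unfolding dense_l2_def
proof (intro conjI ballI allI impI)
  fix x and e :: real
  assume x: "x \<in> l2" and e: "0 < e"
  obtain j where "norm (l2_norm (truncate j x - x) - 0) < e"
    using LIMSEQ_D[OF l2_tendsto_truncate[OF x, unfolded l2_tendsto_def] e] by blast
  then have "l2_norm (x - truncate j x) < e" by (simp add: l2_norm_minus_commute abs_less_iff)
  then show "\<exists>y\<in>S. l2_norm (x - y) < e"
    using assms(1) truncate_D0 by blast
qed (use assms in simp)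

section \<open>Closures and adjoints\<close>

lemma adjoint_cong: "op_eq S T \<Longrightarrow> adjoint S = adjoint T"
proof -
  assume "op_eq S T"
  then have "(\<forall>x\<in>fst S. l2_inner (snd S x) y = l2_inner x z)
      \<longleftrightarrow> (\<forall>x\<in>fst T. l2_inner (snd T x) y = l2_inner x z)" for y z
    unfolding op_eq_def by auto
  then show ?thesis unfolding adjoint_def by simp
qed

lemma self_adjointI:
  assumes dense: "dense_l2 (fst S)"
    and range: "\<And>y. y \<in> fst S \<Longrightarrow> snd S y \<in> l2"
    and adjoint_iff: "\<And>y z. y \<in> l2 \<Longrightarrow> z \<in> l2 \<Longrightarrow>
      (\<forall>x\<in>fst S. l2_inner (snd S x) y = l2_inner x z) \<longleftrightarrow> y \<in> fst S \<and> z = snd S y"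
  shows "self_adjoint S"
proof -
  have "fst S \<subseteq> l2" using dense by (simp add: dense_l2_def)
  have fst_adjoint: "fst (adjoint S) = fst S"
  proof (intro set_eqI iffI)
    fix y assume "y \<in> fst (adjoint S)"
    then obtain z where "y \<in> l2" "z \<in> l2" "\<forall>x\<in>fst S. l2_inner (snd S x) y = l2_inner x z"
      unfolding adjoint_def by auto
    then show "y \<in> fst S" using adjoint_iff by blast
  next
    fix y assume "y \<in> fst S"
    then show "y \<in> fst (adjoint S)"
      unfolding adjoint_def using \<open>fst S \<subseteq> l2\<close> range adjoint_iff by auto
  qed
  have "snd (adjoint S) y = snd S y" if "y \<in> fst S" for y
    unfolding adjoint_def snd_conv
  proof (rule the_equality)
    show "snd S y \<in> l2 \<and> (\<forall>x\<in>fst S. l2_inner (snd S x) y = l2_inner x (snd S y))"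
      using that \<open>fst S \<subseteq> l2\<close> range adjoint_iff by blast
  next
    fix z assume "z \<in> l2 \<and> (\<forall>x\<in>fst S. l2_inner (snd S x) y = l2_inner x z)"
    then show "z = snd S y" using that \<open>fst S \<subseteq> l2\<close> adjoint_iff by blast
  qed
  then show ?thesis
    unfolding self_adjoint_def op_eq_def using dense fst_adjoint by simp
qed

lemma essentially_self_adjointI:
  assumes graph: "\<And>x z. (x, z) \<in> closure_graph T \<longleftrightarrow> x \<in> fst S \<and> z = snd S x"
    and "self_adjoint S"
  shows "essentially_self_adjoint T"
proof -
  have closure_eq: "op_eq (op_closure T) S"
    unfolding op_eq_def op_closure_def using graph by auto
  then have "adjoint (op_closure T) = adjoint S" by (rule adjoint_cong)
  then have "self_adjoint (op_closure T)"
    using closure_eq \<open>self_adjoint S\<close> unfolding self_adjoint_def op_eq_def by auto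
  moreover have "closable T" unfolding closable_def using graph by simp
  ultimately show ?thesis unfolding essentially_self_adjoint_def by simp
qed

section \<open>The operator in the number basis\<close>

lemma funpow_ann_apply:
  "(ann ^^ j) x n = complex_of_real (sqrt (pochhammer (real n + 1) j)) * x (n + j)"
proof (induction j arbitrary: n)
  case (Suc j)
  have "(ann ^^ Suc j) x n = complex_of_real (sqrt (real (Suc n))) * (ann ^^ j) x (Suc n)"
    by (simp add: ann_def)
  also have "\<dots> = complex_of_real (sqrt (real (Suc n)) * sqrt (pochhammer (real n + 1 + 1) j))
      * x (n + Suc j)"
    using Suc[of "Suc n"] by (simp add: add_ac)
  also have "sqrt (real (Suc n)) * sqrt (pochhammer (real n + 1 + 1) j)
      = sqrt (pochhammer (real n + 1) (Suc j))"
    by (simp add: pochhammer_rec real_sqrt_mult add_ac)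
  finally show ?case .
qed simp

lemma funpow_cre_apply:
  "(cre ^^ j) x n = (if j \<le> n
     then complex_of_real (sqrt (pochhammer (real (n - j) + 1) j)) * x (n - j) else 0)"
proof (induction j arbitrary: n)
  case (Suc j)
  show ?case
  proof (cases n)
    case (Suc m)
    have step: "(cre ^^ Suc j) x n = complex_of_real (sqrt (real (Suc m))) * (cre ^^ j) x m"
      using Suc by (simp add: cre_def)
    show ?thesis
    proof (cases "j \<le> m")
      case True
      have "real (m - j) + 1 + real j = real (Suc m)" using True by (simp add: of_nat_diff)
      then have "pochhammer (real (m - j) + 1) (Suc j)
          = real (Suc m) * pochhammer (real (m - j) + 1) j"
        by (simp add: pochhammer_rec')
      then show ?thesis
        using step Suc.IH[of m] True \<open>n = Suc m\<close> by (simp add: real_sqrt_mult)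
    qed (use step Suc.IH[of m] \<open>n = Suc m\<close> in simp)
  qed (simp add: cre_def)
qed simp

text \<open>Matrix elements of the two ladder terms: with \<open>d = k - l\<close>,
  \<open>(a\<^sup>\<dagger>)\<^sup>k a\<^sup>l \<phi>\<^sub>n\<^sub>-\<^sub>d = raise_coeff k l n \<cdot> \<phi>\<^sub>n\<close> and
  \<open>(a\<^sup>\<dagger>)\<^sup>l a\<^sup>k \<phi>\<^sub>n\<^sub>+\<^sub>d = lower_coeff k l n \<cdot> \<phi>\<^sub>n\<close>.\<close>

definition ladder_weight :: "nat \<Rightarrow> nat \<Rightarrow> nat \<Rightarrow> real" where
  "ladder_weight k l m = sqrt (pochhammer (real m + 1) k * pochhammer (real m + 1) l)"

definition raise_coeff :: "nat \<Rightarrow> nat \<Rightarrow> nat \<Rightarrow> real" where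
  "raise_coeff k l n = (if k \<le> n then ladder_weight k l (n - k) else 0)"

definition lower_coeff :: "nat \<Rightarrow> nat \<Rightarrow> nat \<Rightarrow> real" where
  "lower_coeff k l n = (if l \<le> n then ladder_weight k l (n - l) else 0)"

text \<open>For \<open>n < k - l\<close> the index \<open>n - (k - l)\<close> is truncated to \<open>0\<close>; the coefficient
  \<open>raise_coeff k l n\<close> vanishes there.\<close>

definition offdiag :: "nat \<Rightarrow> nat \<Rightarrow> complex \<Rightarrow> vec \<Rightarrow> vec" where
  "offdiag k l \<xi> x = (\<lambda>n. \<xi> * of_real (raise_coeff k l n) * x (n - (k - l))
                        + cnj \<xi> * of_real (lower_coeff k l n) * x (n + (k - l)))"

definition A_act :: "nat \<Rightarrow> nat \<Rightarrow> complex \<Rightarrow> (nat \<Rightarrow> real) \<Rightarrow> vec \<Rightarrow> vec" where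
  "A_act k l \<xi> f x = (\<lambda>n. offdiag k l \<xi> x n + of_real (f n) * x n)"

lemma fst_A_op: "fst (A_op k l \<xi> f) = D0"
  by (simp add: A_op_def)

lemma snd_A_op: "l < k \<Longrightarrow> snd (A_op k l \<xi> f) = A_act k l \<xi> f"
  by (intro ext) (simp add: A_op_def A_act_def offdiag_def num_fun_def funpow_cre_apply
      funpow_ann_apply raise_coeff_def lower_coeff_def ladder_weight_def real_sqrt_mult
      algebra_simps)

lemma raise_coeff_add_shift: "l < k \<Longrightarrow> raise_coeff k l (n + (k - l)) = lower_coeff k l n"
  unfolding raise_coeff_def lower_coeff_def by (auto simp: algebra_simps)

lemma raise_coeff_eq_0: "n < k - l \<Longrightarrow> raise_coeff k l n = 0"
  unfolding raise_coeff_def by auto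

lemma raise_coeff_nonneg: "0 \<le> raise_coeff k l n"
  and lower_coeff_nonneg: "0 \<le> lower_coeff k l n"
  unfolding raise_coeff_def lower_coeff_def ladder_weight_def
  by (auto intro!: mult_nonneg_nonneg pochhammer_nonneg)

lemma pochhammer_le_power: "pochhammer (real m + 1) j \<le> (real m + real j) ^ j"
proof -
  have "pochhammer (real m + 1) j = (\<Prod>i<j. real m + 1 + real i)"
    by (simp add: pochhammer_prod atLeast0LessThan)
  also have "\<dots> \<le> (\<Prod>i<j. real m + real j)" by (rule prod_mono) auto
  finally show ?thesis by simp
qed

lemma ladder_weight_le:
  assumes "l < k"
  shows "ladder_weight k l m \<le> (real m + real k) powr ((real k + real l) / 2)"
proof -
  have pos: "0 < real m + real k" using assms by simp
  have "pochhammer (real m + 1) l \<le> (real m + real l) ^ l" by (rule pochhammer_le_power)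
  also have "\<dots> \<le> (real m + real k) ^ l" using assms by (intro power_mono) auto
  finally have "pochhammer (real m + 1) k * pochhammer (real m + 1) l
      \<le> (real m + real k) ^ k * (real m + real k) ^ l"
    by (intro mult_mono pochhammer_le_power) (auto intro!: pochhammer_nonneg)
  also have "\<dots> = (real m + real k) powr (real k + real l)"
    using pos by (simp add: powr_realpow[symmetric] power_add powr_add)
  finally have "ladder_weight k l m \<le> sqrt ((real m + real k) powr (real k + real l))"
    unfolding ladder_weight_def by simp
  also have "\<dots> = (real m + real k) powr ((real k + real l) / 2)"
    using pos by (simp add: powr_half_sqrt_powr)
  finally show ?thesis .
qed

lemma raise_coeff_le: "l < k \<Longrightarrow> raise_coeff k l n \<le> real n powr ((real k + real l) / 2)"
  unfolding raise_coeff_def using ladder_weight_le[of l k "n - k"] by (auto simp: of_nat_diff)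

lemma lower_coeff_le:
  assumes "l < k"
  shows "lower_coeff k l n \<le> (real n + real (k - l)) powr ((real k + real l) / 2)"
proof (cases "l \<le> n")
  case True
  then have "lower_coeff k l n = ladder_weight k l (n - l)" by (simp add: lower_coeff_def)
  also have "\<dots> \<le> (real (n - l) + real k) powr ((real k + real l) / 2)"
    by (rule ladder_weight_le[OF assms])
  also have "real (n - l) + real k = real n + real (k - l)"
    using True assms by (simp add: of_nat_diff)
  finally show ?thesis .
qed (simp add: lower_coeff_def)

lemma offdiag_vanishes_from:
  "vanishes_from x N \<Longrightarrow> vanishes_from (offdiag k l \<xi> x) (N + (k - l))"
  unfolding vanishes_from_def offdiag_def by auto

lemma offdiag_D0: "x \<in> D0 \<Longrightarrow> offdiag k l \<xi> x \<in> D0"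
  using offdiag_vanishes_from D0_iff_vanishes_from by metis

lemma A_act_D0: "x \<in> D0 \<Longrightarrow> A_act k l \<xi> f x \<in> D0"
  unfolding A_act_def by (intro D0_add offdiag_D0 D0_mult_left)

lemma offdiag_add:
  "offdiag k l \<xi> (\<lambda>n. x n + y n) = (\<lambda>n. offdiag k l \<xi> x n + offdiag k l \<xi> y n)"
  by (intro ext) (simp add: offdiag_def algebra_simps)

lemma offdiag_diff:
  "offdiag k l \<xi> (\<lambda>n. x n - y n) = (\<lambda>n. offdiag k l \<xi> x n - offdiag k l \<xi> y n)"
  by (intro ext) (simp add: offdiag_def algebra_simps)

lemma A_act_diff:
  "A_act k l \<xi> f (\<lambda>n. x n - y n) = (\<lambda>n. A_act k l \<xi> f x n - A_act k l \<xi> f y n)"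
  by (intro ext) (simp add: A_act_def offdiag_diff algebra_simps)

lemma l2_inner_A_act_sym:
  assumes "l < k" and "x \<in> D0"
  shows "l2_inner (A_act k l \<xi> f x) y = l2_inner x (A_act k l \<xi> f y)"
proof -
  let ?d = "k - l" and ?\<alpha> = "\<lambda>n. complex_of_real (raise_coeff k l n)"
    and ?\<beta> = "\<lambda>n. complex_of_real (lower_coeff k l n)"
  obtain N where x: "vanishes_from x N" using assms(2) D0_iff_vanishes_from by blast
  define R where "R = N + ?d"
  have xR: "vanishes_from x R" using vanishes_from_mono[OF x] by (simp add: R_def)
  have AxR: "vanishes_from (A_act k l \<xi> f x) R"
    using offdiag_vanishes_from[OF x] x unfolding A_act_def R_def vanishes_from_def by auto
  define P1 where "P1 n = cnj \<xi> * ?\<alpha> n * cnj (x (n - ?d)) * y n" for n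
  define P2 where "P2 n = \<xi> * ?\<beta> n * cnj (x (n + ?d)) * y n" for n
  define Q1 where "Q1 n = \<xi> * ?\<alpha> n * cnj (x n) * y (n - ?d)" for n
  define Q2 where "Q2 n = cnj \<xi> * ?\<beta> n * cnj (x n) * y (n + ?d)" for n
  have "cnj (A_act k l \<xi> f x n) * y n = P1 n + P2 n + of_real (f n) * cnj (x n) * y n" for n
    by (simp add: A_act_def offdiag_def P1_def P2_def distrib_right)
  then have lhs: "l2_inner (A_act k l \<xi> f x) y
      = (\<Sum>n<R. P1 n) + (\<Sum>n<R. P2 n) + (\<Sum>n<R. of_real (f n) * cnj (x n) * y n)"
    by (simp add: l2_inner_finite[OF AxR] sum.distrib)
  have "cnj (x n) * A_act k l \<xi> f y n = Q1 n + Q2 n + of_real (f n) * cnj (x n) * y n" for n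
    by (simp add: A_act_def offdiag_def Q1_def Q2_def algebra_simps)
  then have rhs: "l2_inner x (A_act k l \<xi> f y)
      = (\<Sum>n<R. Q1 n) + (\<Sum>n<R. Q2 n) + (\<Sum>n<R. of_real (f n) * cnj (x n) * y n)"
    by (simp add: l2_inner_finite[OF xR] sum.distrib)
  have "(\<Sum>n<R. Q2 n) = (\<Sum>n<R. P1 (n + ?d))"
    using raise_coeff_add_shift[OF assms(1)] by (simp add: P1_def Q2_def algebra_simps)
  also have "\<dots> = (\<Sum>n<R. P1 n)"
    using x by (intro sum_lessThan_shift_vanishing)
      (auto simp: P1_def raise_coeff_eq_0 R_def vanishes_from_def)
  finally have "(\<Sum>n<R. P1 n) = (\<Sum>n<R. Q2 n)" ..
  moreover have "(\<Sum>n<R. P2 n) = (\<Sum>n<R. Q1 (n + ?d))"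
    using raise_coeff_add_shift[OF assms(1)] by (simp add: P2_def Q1_def algebra_simps)
  moreover have "\<dots> = (\<Sum>n<R. Q1 n)"
    using xR by (intro sum_lessThan_shift_vanishing)
      (auto simp: Q1_def raise_coeff_eq_0 vanishes_from_def)
  ultimately show ?thesis unfolding lhs rhs by (simp add: algebra_simps)
qed

lemma l2_inner_A_act_self_real:
  assumes "l < k" and "x \<in> D0"
  shows "l2_inner x (A_act k l \<xi> f x) \<in> \<real>"
proof -
  have "A_act k l \<xi> f x \<in> D0" by (rule A_act_D0[OF assms(2)])
  then have "l2_inner x (A_act k l \<xi> f x) = cnj (l2_inner x (A_act k l \<xi> f x))"
    using l2_inner_A_act_sym[OF assms] l2_inner_commute assms(2) by metis
  then show ?thesis by (simp add: Reals_cnj_iff)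
qed

lemma Re_cnj_mult_A_act_ge:
  "f n * (cmod (x n))\<^sup>2
    - cmod \<xi> * raise_coeff k l n * (cmod (x n) * cmod (x (n - (k - l))))
    - cmod \<xi> * lower_coeff k l n * (cmod (x n) * cmod (x (n + (k - l))))
    \<le> Re (cnj (x n) * A_act k l \<xi> f x n)"
proof -
  define t1 where "t1 = cnj (x n) * (\<xi> * of_real (raise_coeff k l n) * x (n - (k - l)))"
  define t2 where "t2 = cnj (x n) * (cnj \<xi> * of_real (lower_coeff k l n) * x (n + (k - l)))"
  have "cnj (x n) * A_act k l \<xi> f x n = t1 + t2 + of_real (f n * (cmod (x n))\<^sup>2)"
    unfolding A_act_def offdiag_def t1_def t2_def of_real_mult complex_norm_square
    by (simp add: algebra_simps)
  then have "Re (cnj (x n) * A_act k l \<xi> f x n) = Re t1 + Re t2 + f n * (cmod (x n))\<^sup>2"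
    by simp
  moreover have "cmod t1 = cmod \<xi> * raise_coeff k l n * (cmod (x n) * cmod (x (n - (k - l))))"
    using raise_coeff_nonneg by (simp add: t1_def norm_mult)
  moreover have "cmod t2 = cmod \<xi> * lower_coeff k l n * (cmod (x n) * cmod (x (n + (k - l))))"
    using lower_coeff_nonneg by (simp add: t2_def norm_mult)
  moreover have "- cmod t1 \<le> Re t1" "- cmod t2 \<le> Re t2"
    using abs_Re_le_cmod[of t1] abs_Re_le_cmod[of t2] by auto
  ultimately show ?thesis by linarith
qed

lemma cross_sums_eq:
  assumes "l < k" and x: "vanishes_from x N"
  shows "(\<Sum>n<N. c * lower_coeff k l n * (cmod (x n) * cmod (x (n + (k - l)))))
    = (\<Sum>n<N. c * raise_coeff k l n * (cmod (x n) * cmod (x (n - (k - l)))))"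
proof -
  let ?g = "\<lambda>n. c * raise_coeff k l n * (cmod (x n) * cmod (x (n - (k - l))))"
  have "(\<Sum>n<N. c * lower_coeff k l n * (cmod (x n) * cmod (x (n + (k - l)))))
      = (\<Sum>n<N. ?g (n + (k - l)))"
    using raise_coeff_add_shift[OF assms(1)] by (simp add: mult.commute)
  also have "\<dots> = (\<Sum>n<N. ?g n)"
    using x by (intro sum_lessThan_shift_vanishing) (auto simp: raise_coeff_eq_0 vanishes_from_def)
  finally show ?thesis .
qed

section \<open>Domination by the diagonal\<close>

lemma norm_mult_divide_of_real_le:
  fixes c :: complex
  assumes "cmod c * r \<le> t * s" "0 \<le> r" "0 < s"
  shows "cmod (c * of_real r / of_real s) \<le> t"
  using assms by (simp add: norm_mult norm_divide divide_le_eq)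

lemma le_if_le_plus_geometric:
  fixes a b c q :: real
  assumes le: "\<And>M. a \<le> b + q ^ M * c" and "0 \<le> q" "q < 1"
  shows "a \<le> b"
proof -
  have "(\<lambda>M. q ^ M * c) \<longlonglongrightarrow> 0"
    using assms(2,3) by (intro tendsto_mult_left_zero LIMSEQ_power_zero) simp
  from tendsto_add[OF tendsto_const[of b] this] have "(\<lambda>M. b + q ^ M * c) \<longlonglongrightarrow> b"
    by simp
  then show ?thesis by (rule LIMSEQ_le_const) (use le in auto)
qed

locale diagonally_dominant =
  fixes k l :: nat and \<xi> :: complex and f :: "nat \<Rightarrow> real" and lam \<theta> :: real
  assumes l_less_k: "l < k" and f_nonneg: "\<And>n. 0 \<le> f n" and lam_pos: "0 < lam"
    and theta_pos: "0 < \<theta>" and theta_less: "\<theta> < 1 / 2"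
    and raise_dominated: "\<And>n. cmod \<xi> * raise_coeff k l n \<le> \<theta> * (f n + lam)"
    and lower_dominated: "\<And>n. cmod \<xi> * lower_coeff k l n \<le> \<theta> * (f n + lam)"
begin

abbreviation "d \<equiv> k - l"
abbreviation "A \<equiv> A_act k l \<xi> f"
abbreviation "A_lam \<equiv> A_act k l \<xi> (\<lambda>n. f n + lam)"

definition diag :: "vec \<Rightarrow> vec" where
  "diag x = (\<lambda>n. of_real (f n + lam) * x n)"

definition L :: "vec \<Rightarrow> vec" where
  "L x = (\<lambda>n. offdiag k l \<xi> x n / of_real (f n + lam))"

definition K :: "vec \<Rightarrow> vec" where
  "K x = offdiag k l \<xi> (\<lambda>n. x n / of_real (f n + lam))"

lemma shifted_pos: "0 < f n + lam"
  using f_nonneg[of n] lam_pos by simp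

lemma shifted_nonzero: "complex_of_real (f n + lam) \<noteq> 0"
  using shifted_pos[of n] by (simp del: of_real_add)

lemma theta_mult_le: "0 \<le> t \<Longrightarrow> \<theta> * t \<le> t"
  using theta_pos theta_less by (simp add: mult_left_le_one_le)

lemma raise_dominated_shift: "d \<le> n \<Longrightarrow> cmod \<xi> * raise_coeff k l n \<le> \<theta> * (f (n - d) + lam)"
  using lower_dominated[of "n - d"] raise_coeff_add_shift[OF l_less_k, of "n - d"] by simp

lemma lower_dominated_shift: "cmod \<xi> * lower_coeff k l n \<le> \<theta> * (f (n + d) + lam)"
  using raise_dominated[of "n + d"] raise_coeff_add_shift[OF l_less_k, of n] by simp

lemma diag_L: "diag (L x) = offdiag k l \<xi> x"
proof (rule ext)
  fix n
  show "diag (L x) n = offdiag k l \<xi> x n"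
    using shifted_nonzero[of n] unfolding diag_def L_def by simp
qed

lemma K_diag: "K (diag x) = offdiag k l \<xi> x"
proof -
  have "(\<lambda>n. diag x n / of_real (f n + lam)) = x"
    using shifted_nonzero unfolding diag_def by (intro ext) simp
  then show ?thesis unfolding K_def by simp
qed

lemma A_lam_eq_diag: "A_lam x = diag (\<lambda>n. x n + L x n)"
proof (rule ext)
  fix n
  show "A_lam x n = diag (\<lambda>n. x n + L x n) n"
    using diag_L[THEN fun_cong, of x n] unfolding diag_def
    by (simp add: A_act_def distrib_left add.commute del: of_real_add)
qed

lemma A_lam_eq_plus: "A_lam x = (\<lambda>n. A x n + of_real lam * x n)"
  by (intro ext) (simp add: A_act_def algebra_simps)

lemma diag_D0: "x \<in> D0 \<Longrightarrow> diag x \<in> D0"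
  unfolding diag_def by (rule D0_mult_left)

lemma L_D0: "x \<in> D0 \<Longrightarrow> L x \<in> D0"
  using D0_mult_left[OF offdiag_D0[where k = k and l = l and \<xi> = \<xi>],
      where c = "\<lambda>n. inverse (of_real (f n + lam))"]
  by (simp add: L_def divide_inverse mult.commute)

lemma L_add: "L (\<lambda>n. x n + y n) = (\<lambda>n. L x n + L y n)"
  by (simp add: L_def offdiag_add add_divide_distrib)

lemma L_diff: "L (\<lambda>n. x n - y n) = (\<lambda>n. L x n - L y n)"
  by (simp add: L_def offdiag_diff diff_divide_distrib)

lemma L_norm_le:
  assumes "x \<in> D0"
  shows "l2_norm (L x) \<le> 2 * \<theta> * l2_norm x"
proof -
  have "l2_norm (L x)
      = l2_norm (\<lambda>n. (\<xi> * of_real (raise_coeff k l n) / of_real (f n + lam)) * x (n - d)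
          + (cnj \<xi> * of_real (lower_coeff k l n) / of_real (f n + lam)) * x (n + d))"
    by (simp add: L_def offdiag_def add_divide_distrib)
  also have "\<dots> \<le> 2 * \<theta> * l2_norm x"
    using assms raise_dominated lower_dominated raise_coeff_nonneg lower_coeff_nonneg shifted_pos
    by (intro l2_norm_band_le norm_mult_divide_of_real_le) (auto simp: raise_coeff_eq_0)
  finally show ?thesis .
qed

lemma K_norm_le:
  assumes "x \<in> D0"
  shows "l2_norm (K x) \<le> 2 * \<theta> * l2_norm x"
proof -
  let ?a = "\<lambda>n. \<xi> * of_real (raise_coeff k l n) / of_real (f (n - d) + lam)"
  let ?b = "\<lambda>n. cnj \<xi> * of_real (lower_coeff k l n) / of_real (f (n + d) + lam)"
  have "l2_norm (K x) = l2_norm (\<lambda>n. ?a n * x (n - d) + ?b n * x (n + d))"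
    by (simp add: K_def offdiag_def)
  also have "\<dots> \<le> 2 * \<theta> * l2_norm x"
  proof (rule l2_norm_band_le[OF assms])
    show "cmod (?a n) \<le> \<theta>" for n
    proof (cases "d \<le> n")
      case True
      show ?thesis by (rule norm_mult_divide_of_real_le[OF raise_dominated_shift[OF True]
            raise_coeff_nonneg shifted_pos])
    qed (use theta_pos in \<open>simp add: raise_coeff_eq_0\<close>)
    show "cmod (?b n) \<le> \<theta>" for n
      using norm_mult_divide_of_real_le[OF _ lower_coeff_nonneg shifted_pos] lower_dominated_shift
      by simp
  qed (simp add: raise_coeff_eq_0)
  finally show ?thesis .
qed

text \<open>One step \<open>\<phi> \<mapsto> p - L \<phi>\<close> of the Neumann iteration for \<open>(1 + L)\<^sup>-\<^sup>1 p\<close> multiplies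
  the residual \<open>\<phi> + L \<phi> - p\<close> by \<open>-L\<close>; after applying \<open>diag\<close> this becomes \<open>-K\<close>.\<close>

lemma diag_neumann_residual:
  "diag (\<lambda>n. (p n - L \<phi> n) + L (\<lambda>n. p n - L \<phi> n) n - p n)
    = (\<lambda>n. - K (diag (\<lambda>n. \<phi> n + L \<phi> n - p n)) n)"
proof -
  have "(\<lambda>n. (p n - L \<phi> n) + L (\<lambda>n. p n - L \<phi> n) n - p n)
      = (\<lambda>n. - L (\<lambda>n. \<phi> n + L \<phi> n - p n) n)"
    by (simp add: L_add L_diff algebra_simps)
  then show ?thesis by (simp add: K_diag diag_L[symmetric]) (simp add: diag_def)
qed

lemma neumann_approx:
  assumes p: "p \<in> D0"
  shows "\<exists>\<phi>\<in>D0. l2_norm \<phi> \<le> l2_norm p / (1 - 2 * \<theta>)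
    \<and> l2_norm (diag (\<lambda>n. \<phi> n + L \<phi> n - p n)) \<le> (2 * \<theta>) ^ M * l2_norm (diag p)"
proof (induction M)
  case 0
  have "l2_norm (\<lambda>n. 0) = 0" by (simp add: l2_norm_def)
  moreover have "L (\<lambda>n. 0) = (\<lambda>n. 0)" by (simp add: L_def offdiag_def)
  moreover have "diag (\<lambda>n. - p n) = (\<lambda>n. - diag p n)" by (simp add: diag_def)
  ultimately show ?case
    using l2_norm_nonneg[OF D0_l2[OF p]] theta_less
    by (intro bexI[of _ "\<lambda>n. 0"]) (auto simp: l2_norm_uminus D0_def)
next
  case (Suc M)
  then obtain \<phi> where \<phi>: "\<phi> \<in> D0" and \<phi>_le: "l2_norm \<phi> \<le> l2_norm p / (1 - 2 * \<theta>)"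
    and res_le: "l2_norm (diag (\<lambda>n. \<phi> n + L \<phi> n - p n)) \<le> (2 * \<theta>) ^ M * l2_norm (diag p)"
    by blast
  define \<psi> where "\<psi> = (\<lambda>n. p n - L \<phi> n)"
  have \<psi>: "\<psi> \<in> D0" unfolding \<psi>_def by (intro D0_diff L_D0 \<phi> p)
  have "l2_norm (diag (\<lambda>n. \<psi> n + L \<psi> n - p n))
      = l2_norm (K (diag (\<lambda>n. \<phi> n + L \<phi> n - p n)))"
    unfolding \<psi>_def diag_neumann_residual by (rule l2_norm_uminus)
  also have "\<dots> \<le> 2 * \<theta> * l2_norm (diag (\<lambda>n. \<phi> n + L \<phi> n - p n))"
    by (intro K_norm_le diag_D0 D0_diff D0_add \<phi> L_D0 p)
  also have "\<dots> \<le> (2 * \<theta>) ^ Suc M * l2_norm (diag p)"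
    using res_le theta_pos by simp
  finally have res: "l2_norm (diag (\<lambda>n. \<psi> n + L \<psi> n - p n))
      \<le> (2 * \<theta>) ^ Suc M * l2_norm (diag p)" .
  have "l2_norm \<psi> \<le> l2_norm p + l2_norm (L \<phi>)"
    unfolding \<psi>_def by (rule l2_norm_diff_le[OF p L_D0[OF \<phi>]])
  also have "\<dots> \<le> l2_norm p + 2 * \<theta> * (l2_norm p / (1 - 2 * \<theta>))"
  proof -
    have "2 * \<theta> * l2_norm \<phi> \<le> 2 * \<theta> * (l2_norm p / (1 - 2 * \<theta>))"
      using \<phi>_le theta_pos by (intro mult_left_mono) auto
    then show ?thesis using L_norm_le[OF \<phi>] by linarith
  qed
  also have "\<dots> = l2_norm p / (1 - 2 * \<theta>)"
    using theta_less by (simp add: field_simps)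
  finally show ?case using \<psi> res by blast
qed

lemma inner_diag_le:
  assumes y: "y \<in> l2" and Ay: "A_lam y \<in> l2" and p: "p \<in> D0"
  shows "cmod (l2_inner (diag p) y) \<le> l2_norm (A_lam y) / (1 - 2 * \<theta>) * l2_norm p"
proof (rule le_if_le_plus_geometric[where q = "2 * \<theta>" and c = "l2_norm (diag p) * l2_norm y"])
  show "0 \<le> 2 * \<theta>" "2 * \<theta> < 1" using theta_pos theta_less by auto
  fix M
  obtain \<phi> where \<phi>: "\<phi> \<in> D0" and \<phi>_le: "l2_norm \<phi> \<le> l2_norm p / (1 - 2 * \<theta>)"
    and res_le: "l2_norm (diag (\<lambda>n. \<phi> n + L \<phi> n - p n)) \<le> (2 * \<theta>) ^ M * l2_norm (diag p)"
    using neumann_approx[OF p] by blast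
  define r where "r = (\<lambda>n. \<phi> n + L \<phi> n - p n)"
  have r: "r \<in> D0" unfolding r_def by (intro D0_diff D0_add \<phi> L_D0 p)
  have "A_lam \<phi> = (\<lambda>n. diag p n + diag r n)"
    unfolding A_lam_eq_diag by (simp add: diag_def r_def algebra_simps)
  have "l2_inner \<phi> (A_lam y) = l2_inner (A_lam \<phi>) y"
    by (rule l2_inner_A_act_sym[OF l_less_k \<phi>, symmetric])
  also have "\<dots> = l2_inner (diag p) y + l2_inner (diag r) y"
    unfolding \<open>A_lam \<phi> = (\<lambda>n. diag p n + diag r n)\<close>
    by (rule l2_inner_add_left[OF diag_D0[OF p] diag_D0[OF r]])
  finally have "cmod (l2_inner (diag p) y)
      \<le> cmod (l2_inner \<phi> (A_lam y)) + cmod (l2_inner (diag r) y)"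
    by (metis add_diff_cancel_right' norm_triangle_ineq4)
  also have "\<dots> \<le> l2_norm \<phi> * l2_norm (A_lam y) + l2_norm (diag r) * l2_norm y"
    using l2_Cauchy_Schwarz[OF D0_l2[OF \<phi>] Ay] l2_Cauchy_Schwarz[OF D0_l2[OF diag_D0[OF r]] y]
    by (rule add_mono)
  also have "\<dots> \<le> l2_norm p / (1 - 2 * \<theta>) * l2_norm (A_lam y)
      + (2 * \<theta>) ^ M * l2_norm (diag p) * l2_norm y"
    using \<phi>_le res_le Ay y unfolding r_def
    by (intro add_mono mult_right_mono l2_norm_nonneg) auto
  finally show "cmod (l2_inner (diag p) y) \<le> l2_norm (A_lam y) / (1 - 2 * \<theta>) * l2_norm p
      + (2 * \<theta>) ^ M * (l2_norm (diag p) * l2_norm y)"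
    by (simp add: mult_ac)
qed

lemma l2_inner_diag_truncate_diag:
  "l2_inner (diag (truncate N (diag y))) y = of_real ((L2_set (\<lambda>n. cmod (diag y n)) {..<N})\<^sup>2)"
proof -
  have "cnj (diag (truncate N (diag y)) n) * y n = of_real ((cmod (diag y n))\<^sup>2)" if "n < N" for n
  proof -
    have "cnj (diag (truncate N (diag y)) n) * y n = of_real ((f n + lam)\<^sup>2) * (y n * cnj (y n))"
      using that by (simp add: diag_def truncate_def power2_eq_square mult_ac del: of_real_add)
    also have "\<dots> = of_real ((cmod (diag y n))\<^sup>2)"
      using shifted_pos[of n] unfolding complex_norm_square[symmetric]
      by (simp add: diag_def norm_mult power_mult_distrib del: of_real_add)
    finally show ?thesis .
  qed
  moreover have "vanishes_from (diag (truncate N (diag y))) N"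
    by (simp add: vanishes_from_def diag_def truncate_def)
  ultimately have "l2_inner (diag (truncate N (diag y))) y
      = (\<Sum>n<N. of_real ((cmod (diag y n))\<^sup>2))"
    by (simp add: l2_inner_finite)
  also have "\<dots> = of_real ((L2_set (\<lambda>n. cmod (diag y n)) {..<N})\<^sup>2)"
    unfolding L2_set_def by (simp add: sum_nonneg)
  finally show ?thesis .
qed

lemma diag_l2:
  assumes y: "y \<in> l2" and Ay: "A y \<in> l2"
  shows "diag y \<in> l2"
proof (rule l2_norm_le_if_L2_set_le(1))
  have A_lam: "A_lam y \<in> l2"
    unfolding A_lam_eq_plus using l2_add[OF Ay l2_mult_left[OF y]] .
  define C where "C = l2_norm (A_lam y) / (1 - 2 * \<theta>)"
  have C: "0 \<le> C" unfolding C_def using l2_norm_nonneg[OF A_lam] theta_less by simp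
  fix N
  define s where "s = L2_set (\<lambda>n. cmod (diag y n)) {..<N}"
  have s: "0 \<le> s" unfolding s_def by simp
  have "vanishes_from (truncate N (diag y)) N" by (simp add: vanishes_from_def truncate_def)
  then have "l2_norm (truncate N (diag y)) = s"
    unfolding s_def by (subst l2_norm_finite) (auto simp: truncate_def intro: L2_set_cong)
  then have "s\<^sup>2 \<le> C * s"
    using inner_diag_le[OF y A_lam truncate_D0, of N "diag y"]
    unfolding C_def l2_inner_diag_truncate_diag s_def[symmetric] by (simp add: norm_power)
  then show "s \<le> C"
    using s C by (cases "s = 0") (auto simp: power2_eq_square mult_le_cancel_right)
qed

lemma norm_A_le:
  "cmod (A u n) \<le> (if d \<le> n then cmod (diag u (n - d)) else 0)
    + cmod (diag u (n + d)) + cmod (diag u n)"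
proof -
  have raise: "cmod \<xi> * raise_coeff k l n * cmod (u (n - d))
      \<le> (if d \<le> n then cmod (diag u (n - d)) else 0)"
  proof (cases "d \<le> n")
    case True
    have "cmod \<xi> * raise_coeff k l n \<le> f (n - d) + lam"
      using raise_dominated_shift[OF True] theta_mult_le shifted_pos order_trans less_imp_le
      by metis
    then show ?thesis
      using True shifted_pos by (simp add: diag_def norm_mult mult_right_mono del: of_real_add)
  qed (simp add: raise_coeff_eq_0)
  have lower: "cmod \<xi> * lower_coeff k l n * cmod (u (n + d)) \<le> cmod (diag u (n + d))"
  proof -
    have "cmod \<xi> * lower_coeff k l n \<le> f (n + d) + lam"
      using lower_dominated_shift theta_mult_le shifted_pos order_trans less_imp_le by metis
    then show ?thesis
      using shifted_pos by (simp add: diag_def norm_mult mult_right_mono del: of_real_add)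
  qed
  have diagonal: "f n * cmod (u n) \<le> cmod (diag u n)"
    using f_nonneg lam_pos shifted_pos
    by (simp add: diag_def norm_mult mult_right_mono del: of_real_add)
  have "cmod (A u n) \<le> cmod (\<xi> * of_real (raise_coeff k l n) * u (n - d))
      + cmod (cnj \<xi> * of_real (lower_coeff k l n) * u (n + d)) + cmod (of_real (f n) * u n)"
    unfolding A_act_def offdiag_def
    by (rule order_trans[OF norm_triangle_ineq add_right_mono[OF norm_triangle_ineq]])
  also have "\<dots> = cmod \<xi> * raise_coeff k l n * cmod (u (n - d))
      + cmod \<xi> * lower_coeff k l n * cmod (u (n + d)) + f n * cmod (u n)"
    using raise_coeff_nonneg lower_coeff_nonneg f_nonneg by (simp add: norm_mult)
  finally show ?thesis using raise lower diagonal by linarith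
qed

lemma A_norm_le_diag:
  assumes "diag u \<in> l2"
  shows "A u \<in> l2" and "l2_norm (A u) \<le> 3 * l2_norm (diag u)"
proof -
  let ?v = "\<lambda>n. cmod (diag u n)"
  have "L2_set (\<lambda>n. cmod (A u n)) {..<R} \<le> 3 * l2_norm (diag u)" for R
  proof -
    have "L2_set (\<lambda>n. cmod (A u n)) {..<R}
        \<le> L2_set (\<lambda>n. (if d \<le> n then ?v (n - d) else 0) + ?v (n + d) + ?v n) {..<R}"
      by (rule L2_set_mono) (simp_all add: norm_A_le)
    also have "\<dots> \<le> L2_set (\<lambda>n. if d \<le> n then ?v (n - d) else 0) {..<R}
        + L2_set (\<lambda>n. ?v (n + d)) {..<R} + L2_set ?v {..<R}"
      using L2_set_triangle_ineq[of "\<lambda>n. (if d \<le> n then ?v (n - d) else 0) + ?v (n + d)" ?v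
          "{..<R}"]
        L2_set_triangle_ineq[of "\<lambda>n. if d \<le> n then ?v (n - d) else 0" "\<lambda>n. ?v (n + d)" "{..<R}"]
      by linarith
    also have "\<dots> \<le> l2_norm (diag u) + l2_norm (diag u) + l2_norm (diag u)"
      using assms by (intro add_mono order_trans[OF L2_set_shift_right_le]
          order_trans[OF L2_set_shift_left_le] L2_set_le_l2_norm)
    finally show ?thesis by simp
  qed
  then show "A u \<in> l2" "l2_norm (A u) \<le> 3 * l2_norm (diag u)"
    by (rule l2_norm_le_if_L2_set_le)+
qed

section \<open>Essential self-adjointness\<close>

lemma A_truncate_tendsto:
  assumes y: "y \<in> l2" and Ay: "A y \<in> l2"
  shows "l2_tendsto (\<lambda>j. A (truncate j y)) (A y)"
proof -
  have Dy: "diag y \<in> l2" by (rule diag_l2[OF y Ay])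
  have bound: "l2_norm (A (truncate j y) - A y) \<le> 3 * l2_norm (truncate j (diag y) - diag y)" for j
  proof -
    have "diag (\<lambda>n. truncate j y n - y n) = truncate j (diag y) - diag y"
      by (auto simp: diag_def truncate_def)
    moreover have "truncate j (diag y) - diag y \<in> l2"
      by (rule l2_diff[OF D0_l2[OF truncate_D0] Dy])
    ultimately show ?thesis
      using A_norm_le_diag(2)[of "\<lambda>n. truncate j y n - y n"]
      by (simp add: A_act_diff fun_diff_def)
  qed
  have lim: "(\<lambda>j. 3 * l2_norm (truncate j (diag y) - diag y)) \<longlonglongrightarrow> 0"
    using l2_tendsto_truncate[OF Dy] unfolding l2_tendsto_def by (rule tendsto_mult_right_zero)
  have nonneg: "0 \<le> l2_norm (A (truncate j y) - A y)" for j
    by (rule l2_norm_nonneg[OF l2_diff[OF D0_l2[OF A_act_D0[OF truncate_D0]] Ay]])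
  show ?thesis
    unfolding l2_tendsto_def
    by (rule tendsto_sandwich[OF always_eventually always_eventually _ lim, where f = "\<lambda>_. 0"])
      (use bound nonneg in auto)
qed

definition A_max :: lop where
  "A_max = ({x \<in> l2. A x \<in> l2}, A)"

lemma closure_graph_A_op_iff:
  "(x, z) \<in> closure_graph (A_op k l \<xi> f) \<longleftrightarrow> x \<in> fst A_max \<and> z = snd A_max x"
proof
  assume "(x, z) \<in> closure_graph (A_op k l \<xi> f)"
  then obtain s where x: "x \<in> l2" and z: "z \<in> l2" and s: "\<And>j. s j \<in> D0"
    and sx: "l2_tendsto s x" and sz: "l2_tendsto (\<lambda>j. A (s j)) z"
    unfolding closure_graph_def fst_A_op snd_A_op[OF l_less_k] by auto
  have "z n = A x n" for n
  proof (rule LIMSEQ_unique)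
    show "(\<lambda>j. A (s j) n) \<longlonglongrightarrow> z n"
      using s by (intro l2_tendsto_component[OF _ z sz] D0_l2 A_act_D0)
    have "(\<lambda>j. s j m) \<longlonglongrightarrow> x m" for m
      using s by (intro l2_tendsto_component[OF _ x sx] D0_l2)
    then show "(\<lambda>j. A (s j) n) \<longlonglongrightarrow> A x n"
      unfolding A_act_def offdiag_def by (intro tendsto_intros)
  qed
  then have "z = A x" ..
  then show "x \<in> fst A_max \<and> z = snd A_max x" using x z by (simp add: A_max_def)
next
  assume "x \<in> fst A_max \<and> z = snd A_max x"
  then have "x \<in> l2" "A x \<in> l2" "z = A x" by (auto simp: A_max_def)
  then show "(x, z) \<in> closure_graph (A_op k l \<xi> f)"
    unfolding closure_graph_def fst_A_op snd_A_op[OF l_less_k]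
    using truncate_D0 l2_tendsto_truncate A_truncate_tendsto
    by (auto intro!: exI[of _ "\<lambda>j. truncate j x"])
qed

lemma adjoint_A_max_iff:
  assumes y: "y \<in> l2" and z: "z \<in> l2"
  shows "(\<forall>x\<in>fst A_max. l2_inner (snd A_max x) y = l2_inner x z) \<longleftrightarrow> y \<in> fst A_max \<and> z = snd A_max y"
proof
  assume adj: "\<forall>x\<in>fst A_max. l2_inner (snd A_max x) y = l2_inner x z"
  have "z n = A y n" for n
  proof -
    have "basis_vec n \<in> fst A_max"
      using basis_vec_D0 by (simp add: A_max_def D0_l2 A_act_D0)
    then have "l2_inner (A (basis_vec n)) y = l2_inner (basis_vec n) z"
      using adj by (simp add: A_max_def)
    then show ?thesis
      using l2_inner_A_act_sym[OF l_less_k basis_vec_D0] by (simp add: l2_inner_basis_vec)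
  qed
  then have "z = A y" ..
  then show "y \<in> fst A_max \<and> z = snd A_max y" using y z by (simp add: A_max_def)
next
  assume "y \<in> fst A_max \<and> z = snd A_max y"
  then have Ay: "A y \<in> l2" and z_eq: "z = A y" by (auto simp: A_max_def)
  show "\<forall>x\<in>fst A_max. l2_inner (snd A_max x) y = l2_inner x z"
  proof
    fix x assume "x \<in> fst A_max"
    then have x: "x \<in> l2" and Ax: "A x \<in> l2" by (auto simp: A_max_def)
    have "(\<lambda>j. l2_inner (A (truncate j x)) y) \<longlonglongrightarrow> l2_inner (A x) y"
      using A_truncate_tendsto[OF x Ax]
      by (intro l2_inner_tendsto_left[OF _ Ax y] D0_l2 A_act_D0 truncate_D0)
    moreover have "(\<lambda>j. l2_inner (truncate j x) (A y)) \<longlonglongrightarrow> l2_inner x (A y)"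
      using l2_tendsto_truncate[OF x]
      by (intro l2_inner_tendsto_left[OF _ x Ay] D0_l2 truncate_D0)
    moreover have "l2_inner (A (truncate j x)) y = l2_inner (truncate j x) (A y)" for j
      by (rule l2_inner_A_act_sym[OF l_less_k truncate_D0])
    ultimately show "l2_inner (snd A_max x) y = l2_inner x z"
      unfolding z_eq A_max_def using LIMSEQ_unique by simp
  qed
qed

theorem self_adjoint_A_max: "self_adjoint A_max"
proof (rule self_adjointI[OF _ _ adjoint_A_max_iff])
  show "dense_l2 (fst A_max)"
    by (rule dense_l2_if_D0_subset) (auto simp: A_max_def D0_l2 A_act_D0)
qed (simp add: A_max_def)

theorem essentially_self_adjoint_A_op: "essentially_self_adjoint (A_op k l \<xi> f)"
  by (rule essentially_self_adjointI[OF closure_graph_A_op_iff self_adjoint_A_max])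

section \<open>Semiboundedness\<close>

lemma cross_sum_le:
  "(\<Sum>n<N. cmod \<xi> * raise_coeff k l n * (cmod (x n) * cmod (x (n - d))))
    \<le> \<theta> * (\<Sum>n<N. (f n + lam) * (cmod (x n))\<^sup>2)"
proof -
  let ?a = "\<lambda>n. cmod (x n)" and ?h = "\<lambda>n. (f n + lam) * (cmod (x n))\<^sup>2"
  have pointwise: "2 * (cmod \<xi> * raise_coeff k l n * (?a n * ?a (n - d)))
      \<le> \<theta> * ?h n + \<theta> * (if d \<le> n then ?h (n - d) else 0)" for n
  proof (cases "d \<le> n")
    case True
    let ?c = "cmod \<xi> * raise_coeff k l n"
    have "2 * (?c * (?a n * ?a (n - d))) \<le> ?c * (?a n)\<^sup>2 + ?c * (?a (n - d))\<^sup>2"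
      using mult_left_mono[OF sum_squares_bound[of "?a n" "?a (n - d)"], of ?c] raise_coeff_nonneg
      by (simp add: algebra_simps)
    also have "\<dots> \<le> \<theta> * ?h n + \<theta> * ?h (n - d)"
      using mult_right_mono[OF raise_dominated[of n], of "(?a n)\<^sup>2"]
        mult_right_mono[OF raise_dominated_shift[OF True], of "(?a (n - d))\<^sup>2"]
      by (simp add: mult.assoc)
    finally show ?thesis using True by simp
  qed (use theta_pos shifted_pos[of n] in \<open>simp add: raise_coeff_eq_0 zero_le_mult_iff\<close>)
  have "(\<Sum>n<N. 2 * (cmod \<xi> * raise_coeff k l n * (?a n * ?a (n - d))))
      \<le> (\<Sum>n<N. \<theta> * ?h n + \<theta> * (if d \<le> n then ?h (n - d) else 0))"
    by (rule sum_mono) (rule pointwise)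
  then have "2 * (\<Sum>n<N. cmod \<xi> * raise_coeff k l n * (?a n * ?a (n - d)))
      \<le> \<theta> * (\<Sum>n<N. ?h n) + \<theta> * (\<Sum>n<N. if d \<le> n then ?h (n - d) else 0)"
    by (simp add: sum_distrib_left sum.distrib)
  also have "\<dots> \<le> \<theta> * (\<Sum>n<N. ?h n) + \<theta> * (\<Sum>n<N. ?h n)"
    using theta_pos shifted_pos
    by (intro add_left_mono mult_left_mono sum_lessThan_shift_right_le mult_nonneg_nonneg)
      (simp_all add: less_imp_le)
  finally show ?thesis by simp
qed

lemma Re_inner_A_ge:
  assumes "x \<in> D0"
  shows "- lam * (l2_norm x)\<^sup>2 \<le> Re (l2_inner x (A x))"
proof -
  obtain N where x: "vanishes_from x N" using assms D0_iff_vanishes_from by blast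
  let ?a = "\<lambda>n. cmod (x n)"
  define cross where "cross = (\<Sum>n<N. cmod \<xi> * raise_coeff k l n * (?a n * ?a (n - d)))"
  define E where "E = (\<Sum>n<N. (f n + lam) * (?a n)\<^sup>2)"
  have "(\<Sum>n<N. f n * (?a n)\<^sup>2 - cmod \<xi> * raise_coeff k l n * (?a n * ?a (n - d))
      - cmod \<xi> * lower_coeff k l n * (?a n * ?a (n + d))) \<le> (\<Sum>n<N. Re (cnj (x n) * A x n))"
    by (rule sum_mono) (rule Re_cnj_mult_A_act_ge)
  then have "(\<Sum>n<N. f n * (?a n)\<^sup>2) - cross - cross \<le> Re (l2_inner x (A x))"
    using cross_sums_eq[OF l_less_k x, of "cmod \<xi>"]
    by (simp add: l2_inner_finite[OF x] Re_sum sum_subtractf cross_def)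
  moreover have "cross \<le> \<theta> * E" unfolding cross_def E_def by (rule cross_sum_le)
  moreover have "2 * \<theta> * E \<le> E"
    using theta_less shifted_pos unfolding E_def
    by (intro mult_left_le_one_le sum_nonneg mult_nonneg_nonneg) (auto intro: less_imp_le theta_pos)
  moreover have "E = (\<Sum>n<N. f n * (?a n)\<^sup>2) + lam * (l2_norm x)\<^sup>2"
    unfolding E_def l2_norm_finite[OF x] L2_set_def
    by (simp add: sum_nonneg sum.distrib sum_distrib_left algebra_simps)
  ultimately show ?thesis by linarith
qed

theorem bounded_below_A_op: "bounded_below (A_op k l \<xi> f)"
  unfolding bounded_below_def fst_A_op snd_A_op[OF l_less_k]
  using l2_inner_A_act_self_real[OF l_less_k] Re_inner_A_ge
  by (intro exI[of _ "- lam"]) auto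

end

section \<open>Choice of the constants\<close>

lemma eventually_powr_shift_le:
  fixes d p r :: real
  assumes "0 \<le> d" "1 < r"
  shows "eventually (\<lambda>n. (real n + d) powr p \<le> r * real n powr p) sequentially"
proof -
  have "(\<lambda>n. (1 + d / real n) powr p) \<longlonglongrightarrow> (1 + 0) powr p"
    by (intro tendsto_powr tendsto_add tendsto_const lim_const_over_n) simp
  then have "eventually (\<lambda>n. (1 + d / real n) powr p < r) sequentially"
    using assms(2) by (simp add: order_tendstoD(2))
  then show ?thesis
    using eventually_gt_at_top[of 0]
  proof eventually_elim
    case (elim n)
    then have "real n + d = real n * (1 + d / real n)" by (simp add: field_simps)
    then have "(real n + d) powr p = real n powr p * (1 + d / real n) powr p"
      using assms(1) by (simp add: powr_mult)
    also have "\<dots> \<le> real n powr p * r" using elim by (intro mult_left_mono) auto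
    finally show ?case by (simp add: mult.commute)
  qed
qed

lemma eventually_le_imp_le_plus_const:
  fixes g h :: "nat \<Rightarrow> real"
  assumes "eventually (\<lambda>n. g n \<le> h n) sequentially" and h: "\<And>n. 0 \<le> h n"
  shows "\<exists>c>0. \<forall>n. g n \<le> h n + c"
proof -
  obtain M where M: "\<And>n. M \<le> n \<Longrightarrow> g n \<le> h n"
    using assms(1) by (auto simp: eventually_sequentially)
  define c where "c = (\<Sum>m<M. \<bar>g m\<bar>) + 1"
  have c: "0 < c" unfolding c_def by (simp add: sum_nonneg add_nonneg_pos)
  have "g n \<le> h n + c" for n
  proof (cases "n < M")
    case True
    then have "g n \<le> (\<Sum>m<M. \<bar>g m\<bar>)"
      by (meson abs_ge_self abs_ge_zero finite_lessThan lessThan_iff member_le_sum order_trans)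
    then show ?thesis using h[of n] by (simp add: c_def)
  qed (use M c in \<open>auto simp: not_less intro: add_increasing2 less_imp_le\<close>)
  with c show ?thesis by blast
qed

lemma diagonally_dominantI:
  assumes "l < k" "\<And>n. 0 \<le> f n" "0 < lam" "0 < \<theta>" "\<theta> < 1 / 2"
    and dominated: "\<And>n. cmod \<xi> * (real n + real (k - l)) powr ((real k + real l) / 2)
      \<le> \<theta> * (f n + lam)"
  shows "diagonally_dominant k l \<xi> f lam \<theta>"
proof
  show "l < k" "\<And>n. 0 \<le> f n" "0 < lam" "0 < \<theta>" "\<theta> < 1 / 2" by fact+
  fix n
  have "raise_coeff k l n \<le> (real n + real (k - l)) powr ((real k + real l) / 2)"
    using raise_coeff_le[OF \<open>l < k\<close>, of n] by (rule order_trans) (intro powr_mono2, auto)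
  then show "cmod \<xi> * raise_coeff k l n \<le> \<theta> * (f n + lam)"
    using dominated[of n] by (meson mult_left_mono norm_ge_zero order_trans)
  show "cmod \<xi> * lower_coeff k l n \<le> \<theta> * (f n + lam)"
    using lower_coeff_le[OF \<open>l < k\<close>, of n] dominated[of n]
    by (meson mult_left_mono norm_ge_zero order_trans)
qed

lemma diagonally_dominant_exists:
  fixes k l N :: nat and \<xi> :: complex and f :: "nat \<Rightarrow> real" and \<kappa> :: real
  assumes "k > l"
    and f_nonneg: "\<And>n. f n \<ge> 0"
    and "\<kappa> > 2"
    and growth: "\<And>n. n \<ge> N \<Longrightarrow> f n \<ge> \<kappa> * cmod \<xi> * real n powr ((real k + real l) / 2)"
  shows "\<exists>lam \<theta>. diagonally_dominant k l \<xi> f lam \<theta>"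
proof -
  define p where "p = (real k + real l) / 2"
  define \<theta> where "\<theta> = (1 / \<kappa> + 1 / 2) / 2"
  have \<theta>: "0 < \<theta>" "\<theta> < 1 / 2" "1 < \<theta> * \<kappa>"
    using \<open>\<kappa> > 2\<close> unfolding \<theta>_def by (auto simp: field_simps)
  have "eventually (\<lambda>n. cmod \<xi> * (real n + real (k - l)) powr p \<le> \<theta> * f n) sequentially"
    using eventually_powr_shift_le[OF of_nat_0_le_iff[of "k - l"] \<theta>(3), where p = p]
      eventually_ge_at_top[of N]
  proof eventually_elim
    case (elim n)
    have "cmod \<xi> * (real n + real (k - l)) powr p \<le> cmod \<xi> * (\<theta> * \<kappa> * real n powr p)"
      using elim(1) by (simp add: mult_left_mono)
    also have "\<dots> = \<theta> * (\<kappa> * cmod \<xi> * real n powr p)" by simp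
    also have "\<dots> \<le> \<theta> * f n"
      using growth[OF elim(2)] \<theta>(1) unfolding p_def by (simp add: mult_left_mono)
    finally show ?case .
  qed
  then obtain c where "0 < c"
    and c: "\<And>n. cmod \<xi> * (real n + real (k - l)) powr p \<le> \<theta> * f n + c"
    using eventually_le_imp_le_plus_const[of _ "\<lambda>n. \<theta> * f n"] \<theta>(1) f_nonneg by fastforce
  have "diagonally_dominant k l \<xi> f (c / \<theta>) \<theta>"
  proof (rule diagonally_dominantI)
    show "cmod \<xi> * (real n + real (k - l)) powr ((real k + real l) / 2) \<le> \<theta> * (f n + c / \<theta>)"
      for n using c[of n] \<theta>(1) by (simp add: p_def distrib_left)
  qed (use \<open>k > l\<close> f_nonneg \<theta> \<open>0 < c\<close> in auto)
  then show ?thesis by blast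
qed

theorem corollary3p6:
  fixes k l N :: nat and \<xi> :: complex and f :: "nat \<Rightarrow> real" and \<kappa> :: real
  assumes "k > l"
    and "\<And>n. f n \<ge> 0"
    and "\<kappa> > 2"
    and "\<And>n. n \<ge> N \<Longrightarrow> f n \<ge> \<kappa> * cmod \<xi> * real n powr ((real k + real l) / 2)"
  shows "essentially_self_adjoint (A_op k l \<xi> f) \<and> bounded_below (A_op k l \<xi> f)"
proof -
  obtain lam \<theta> where "diagonally_dominant k l \<xi> f lam \<theta>"
    using diagonally_dominant_exists[OF assms] by blast
  then interpret diagonally_dominant k l \<xi> f lam \<theta> .
  show ?thesis using essentially_self_adjoint_A_op bounded_below_A_op by simp
qed

end
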